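(* The matroid $V_{10}$ has the half-plane property; that is, $f_{10}$ is stable.
   Context: $V_{10}$ is the matroid on $\{1,\dots,10\}$ whose bases are all $4$-element subsets of $\{1,\dots,10\}$ except $\{1,2,3,4\},\{1,2,5,6\},\{1,2,7,8\},\{1,2,9,10\},\{3,4,5,6\},\{5,6,7,8\},\{7,8,9,10\}$, and $f_{10}=\sum_{B}\prod_{i\in B}x_i\in\mathbb{R}[x_1,\dots,x_{10}]$ (sum over bases $B$ of $V_{10}$) is its basis generating polynomial. A homogeneous real polynomial $f$ is stable if for all $v\in(\mathbb{R}_{>0})^{10}$ and $w\in\mathbb{R}^{10}$, $f(tv+w)\in\mathbb{R}[t]$ has only real roots; a matroid has the half-plane property if its basis generating polynomial is stable. *)

theory Defs
  imports Complex_Main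
begin

definition V10_bases :: "nat set set" where
  "V10_bases = {B. B \<subseteq> {1..10} \<and> card B = 4} -
     {{1,2,3,4}, {1,2,5,6}, {1,2,7,8}, {1,2,9,10}, {3,4,5,6}, {5,6,7,8}, {7,8,9,10}}"

text \<open>Basis generating polynomial of a set of bases, as a polynomial function
  (evaluated at complex points, so that complex roots can be discussed).\<close>
definition basis_gen_poly :: "nat set set \<Rightarrow> (nat \<Rightarrow> complex) \<Rightarrow> complex" where
  "basis_gen_poly \<B> x = (\<Sum>B\<in>\<B>. \<Prod>i\<in>B. x i)"

definition f10 :: "(nat \<Rightarrow> complex) \<Rightarrow> complex" where
  "f10 = basis_gen_poly V10_bases"

definition stable :: "nat \<Rightarrow> ((nat \<Rightarrow> complex) \<Rightarrow> complex) \<Rightarrow> bool" where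
  "stable n f \<longleftrightarrow>
     (\<forall>v w :: nat \<Rightarrow> real. (\<forall>i\<in>{1..n}. v i > 0) \<longrightarrow>
        (\<forall>t :: complex. f (\<lambda>i. t * complex_of_real (v i) + complex_of_real (w i)) = 0
            \<longrightarrow> t \<in> \<real>))"

definition half_plane_property :: "nat \<Rightarrow> nat set set \<Rightarrow> bool" where
  "half_plane_property n \<B> \<longleftrightarrow> stable n (basis_gen_poly \<B>)"

end

theory Submission
  imports Defs
begin

text \<open>Grouping the variables in the pairs \<open>{1,2}, {3,4}, ..., {9,10}\<close>, the polynomial
  \<open>f10\<close> depends on each pair only through its sum and product, and affinely. By the
  Grace-Walsh-Szego theorem for two variables, a zero of \<open>f10\<close> with all coordinates in the
  open upper half-plane therefore yields such a zero \<open>z\<close> of the diagonal polynomial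
  \<open>G(z) = f10(z1, z1, z2, z2, ..., z5, z5)\<close>. This is excluded by a Bezoutian-type certificate:
  with \<open>H = e1 * e2\<close>,
  \<open>80 (G(u) H(w) - G(w) H(u)) = \<Sum>k. (uk - wk) \<nu>k(w)\<^sup>T Qk \<nu>k(u)\<close>
  for vectors of monomials \<open>\<nu>k\<close> and positive semidefinite Gram matrices \<open>Qk\<close>. At
  \<open>w = cnj z\<close> the right-hand side is \<open>2i \<Sum>k. Im zk * rk\<close> with each \<open>rk\<close> a Hermitian sum of
  squares, so \<open>G(z) = 0\<close> forces all these squares to vanish, among them \<open>|z1 z2 z4|\<^sup>2\<close>. As
  \<open>f10\<close> has real coefficients, having no zeros in the upper half-plane means being stable.\<close>

section \<open>Stability from the absence of zeros in the upper half-plane\<close>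

lemma stable_if_no_zeros_upper_half_plane:
  assumes real_coeffs: "\<And>x. f (\<lambda>i. cnj (x i)) = cnj (f x)"
    and nonzero: "\<And>x. \<forall>i\<in>{1..n}. Im (x i) > 0 \<Longrightarrow> f x \<noteq> 0"
  shows "stable n f"
  unfolding stable_def
proof (intro allI impI)
  fix v w :: "nat \<Rightarrow> real" and t :: complex
  assume pos: "\<forall>i\<in>{1..n}. v i > 0"
    and root: "f (\<lambda>i. t * complex_of_real (v i) + complex_of_real (w i)) = 0"
  define x where "x = (\<lambda>i. t * complex_of_real (v i) + complex_of_real (w i))"
  have Im_x: "Im (x i) = Im t * v i" for i by (simp add: x_def)
  have "f x = 0" using root by (simp add: x_def)
  show "t \<in> \<real>"
  proof (rule ccontr)
    assume "t \<notin> \<real>"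
    then consider "Im t > 0" | "Im t < 0" by (metis complex_is_Real_iff linorder_neqE_linordered_idom)
    then show False
    proof cases
      case 1
      then have "\<forall>i\<in>{1..n}. Im (x i) > 0" using pos by (simp add: Im_x)
      then show False using nonzero \<open>f x = 0\<close> by blast
    next
      case 2
      then have "\<forall>i\<in>{1..n}. Im (cnj (x i)) > 0" using pos by (simp add: Im_x mult_neg_pos)
      moreover have "f (\<lambda>i. cnj (x i)) = 0" using \<open>f x = 0\<close> by (simp add: real_coeffs)
      ultimately show False using nonzero[of "\<lambda>i. cnj (x i)"] by blast
    qed
  qed
qed

lemma basis_gen_poly_cnj:
  "basis_gen_poly \<B> (\<lambda>i. cnj (x i)) = cnj (basis_gen_poly \<B> x)"
  by (simp add: basis_gen_poly_def)

section \<open>Grace-Walsh-Szego for two variables\<close>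

lemma abs_Im_sqrt_of_product_gt:
  fixes U V w :: complex
  assumes w: "w * w = U * V" and U: "Im U > t" and V: "Im V > t" and t: "t \<ge> 0"
  shows "\<bar>Im w\<bar> > t"
proof -
  have "(\<bar>Re U * Re V\<bar> + Im U * Im V)\<^sup>2 \<le> ((Re U)\<^sup>2 + (Im U)\<^sup>2) * ((Re V)\<^sup>2 + (Im V)\<^sup>2)"
  proof -
    have "0 \<le> (\<bar>Re U\<bar> * Im V - Im U * \<bar>Re V\<bar>)\<^sup>2" by simp
    then show ?thesis by (simp add: power2_eq_square abs_mult algebra_simps)
  qed
  also have "\<dots> = (cmod U * cmod V)\<^sup>2" by (simp add: power_mult_distrib cmod_power2)
  finally have "\<bar>Re U * Re V\<bar> + Im U * Im V \<le> cmod U * cmod V"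
    by (rule power2_le_imp_le) simp
  moreover have "t * t < Im U * Im V" using U V t by (meson le_less_trans mult_strict_mono')
  moreover have "cmod (w * w) = (Re w)\<^sup>2 + (Im w)\<^sup>2" by (metis cmod_power2 norm_mult power2_eq_square)
  moreover have "Re (w * w) = (Re w)\<^sup>2 - (Im w)\<^sup>2" by (simp add: power2_eq_square)
  ultimately have "t\<^sup>2 < \<bar>Im w\<bar>\<^sup>2"
    using w by (simp add: norm_mult power2_eq_square abs_if split: if_splits)
  then show ?thesis using t by (meson abs_ge_zero power_less_imp_less_base)
qed

lemma grace_walsh_szego_2:
  fixes a b c x y :: complex
  assumes x: "Im x > 0" and y: "Im y > 0" and root: "a + (x + y) * b + (x * y) * c = 0"
  shows "\<exists>z. Im z > 0 \<and> a + (2 * z) * b + (z * z) * c = 0"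
proof (cases "c = 0")
  case True
  have "2 * ((x + y) / 2) = x + y" by simp
  then have "Im ((x + y) / 2) > 0 \<and> a + (2 * ((x + y) / 2)) * b + ((x + y) / 2 * ((x + y) / 2)) * c = 0"
    using x y root True by (simp only:) simp
  then show ?thesis by blast
next
  case False
  define l where "l = b / c"
  define w where "w = csqrt ((l + x) * (l + y))"
  have w2: "w * w = (l + x) * (l + y)" unfolding w_def by (metis power2_csqrt power2_eq_square)
  have root_shifted: "a + (2 * z) * b + (z * z) * c = 0" if "(z + l) * (z + l) = w * w" for z
  proof -
    have "a + (2 * z) * b + (z * z) * c = a + c * ((z + l) * (z + l) - l * l)"
      using False by (simp add: l_def field_simps)
    also have "\<dots> = a + c * (w * w - l * l)" using that by simp
    also have "\<dots> = a + c * (l * (x + y) + x * y)" by (simp add: w2 algebra_simps)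
    also have "\<dots> = a + (x + y) * b + (x * y) * c"
      using False by (simp add: l_def field_simps)
    finally show ?thesis using root by simp
  qed
  have "\<bar>Im w\<bar> > Im l"
  proof (cases "Im l < 0")
    case False
    then show ?thesis using abs_Im_sqrt_of_product_gt[OF w2] x y by simp
  qed simp
  define z where "z = (if Im w \<ge> 0 then w else - w) - l"
  have "Im z > 0" using \<open>\<bar>Im w\<bar> > Im l\<close> by (cases "Im w \<ge> 0") (simp_all add: z_def)
  moreover have "(z + l) * (z + l) = w * w" by (simp add: z_def)
  ultimately show ?thesis using root_shifted by blast
qed

section \<open>Reduction to the diagonal polynomial\<close>

definition elem_sym :: "nat set \<Rightarrow> nat \<Rightarrow> (nat \<Rightarrow> complex) \<Rightarrow> complex" where
  "elem_sym S k x = (\<Sum>B\<in>{B. B \<subseteq> S \<and> card B = k}. \<Prod>i\<in>B. x i)"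

lemma elem_sym_0: "finite S \<Longrightarrow> elem_sym S 0 x = 1"
proof -
  assume fin: "finite S"
  have "B \<subseteq> S \<and> card B = 0 \<longleftrightarrow> B = {}" for B
    using fin by (metis card.empty card_0_eq empty_subsetI finite_subset)
  then have "{B. B \<subseteq> S \<and> card B = 0} = {{}}" by auto
  then show ?thesis by (simp add: elem_sym_def)
qed

lemma elem_sym_empty: "elem_sym {} (Suc k) x = 0"
  by (simp add: elem_sym_def)

lemma card_Suc_subsets_insert:
  assumes fin: "finite S" and a: "a \<notin> S"
  shows "{B. B \<subseteq> insert a S \<and> card B = Suc k}
    = {B. B \<subseteq> S \<and> card B = Suc k} \<union> insert a ` {B. B \<subseteq> S \<and> card B = k}"
    (is "?L = ?A \<union> insert a ` ?C")
proof (intro set_eqI iffI)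
  fix B assume "B \<in> ?L"
  then have B: "B \<subseteq> insert a S" "card B = Suc k" by auto
  show "B \<in> ?A \<union> insert a ` ?C"
  proof (cases "a \<in> B")
    case True
    have "B - {a} \<subseteq> S" using B by auto
    moreover have "card (B - {a}) = k" using B True by (simp add: card_Diff_singleton)
    moreover have "B = insert a (B - {a})" using True by auto
    ultimately show ?thesis by blast
  next
    case False
    then have "B \<subseteq> S" using B by auto
    then show ?thesis using B by auto
  qed
next
  fix B assume "B \<in> ?A \<union> insert a ` ?C"
  then show "B \<in> ?L"
  proof
    assume "B \<in> insert a ` ?C"
    then obtain C where C: "C \<subseteq> S" "card C = k" "B = insert a C" by auto
    have "finite C" using C fin finite_subset by auto
    moreover have "a \<notin> C" using C a by auto
    ultimately show ?thesis using C by auto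
  qed auto
qed

lemma elem_sym_insert:
  assumes fin: "finite S" and a: "a \<notin> S"
  shows "elem_sym (insert a S) (Suc k) x = elem_sym S (Suc k) x + x a * elem_sym S k x"
proof -
  let ?A = "{B. B \<subseteq> S \<and> card B = Suc k}"
  let ?C = "{B. B \<subseteq> S \<and> card B = k}"
  have inj: "inj_on (insert a) ?C" using a by (auto simp: inj_on_def)
  have "elem_sym (insert a S) (Suc k) x
      = (\<Sum>B\<in>?A. \<Prod>i\<in>B. x i) + (\<Sum>B\<in>insert a ` ?C. \<Prod>i\<in>B. x i)"
    unfolding elem_sym_def card_Suc_subsets_insert[OF fin a]
    using fin a by (intro sum.union_disjoint) auto
  also have "(\<Sum>B\<in>insert a ` ?C. \<Prod>i\<in>B. x i) = (\<Sum>C\<in>?C. \<Prod>i\<in>insert a C. x i)"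
    using inj by (simp add: sum.reindex)
  also have "\<dots> = (\<Sum>C\<in>?C. x a * (\<Prod>i\<in>C. x i))"
  proof (rule sum.cong)
    fix C assume "C \<in> ?C"
    then have "finite C" "a \<notin> C" using fin a finite_subset by auto
    then show "(\<Prod>i\<in>insert a C. x i) = x a * (\<Prod>i\<in>C. x i)" by simp
  qed simp
  finally show ?thesis by (simp add: elem_sym_def sum_distrib_left)
qed

definition pair_form :: "(nat \<Rightarrow> complex) \<Rightarrow> (nat \<Rightarrow> complex) \<Rightarrow> complex" where
  "pair_form s p = p 2 * p 4 + p 2 * p 5 + p 3 * p 5
     + p 1 * (s 2 * s 3 + s 2 * s 4 + s 2 * s 5 + s 3 * s 4 + s 3 * s 5 + s 4 * s 5)
     + p 2 * (s 1 * s 3 + s 1 * s 4 + s 1 * s 5 + s 3 * s 4 + s 3 * s 5 + s 4 * s 5)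
     + p 3 * (s 1 * s 2 + s 1 * s 4 + s 1 * s 5 + s 2 * s 4 + s 2 * s 5 + s 4 * s 5)
     + p 4 * (s 1 * s 2 + s 1 * s 3 + s 1 * s 5 + s 2 * s 3 + s 2 * s 5 + s 3 * s 5)
     + p 5 * (s 1 * s 2 + s 1 * s 3 + s 1 * s 4 + s 2 * s 3 + s 2 * s 4 + s 3 * s 4)
     + s 1 * s 2 * s 3 * s 4 + s 1 * s 2 * s 3 * s 5 + s 1 * s 2 * s 4 * s 5
     + s 1 * s 3 * s 4 * s 5 + s 2 * s 3 * s 4 * s 5"

lemma f10_eq_pair_form:
  "f10 x = pair_form (\<lambda>k. x (2 * k - 1) + x (2 * k)) (\<lambda>k. x (2 * k - 1) * x (2 * k))"
proof -
  let ?excluded = "{{1,2,3,4}, {1,2,5,6}, {1,2,7,8}, {1,2,9,10}, {3,4,5,6}, {5,6,7,8}, {7,8,9,10::nat}}"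
  have fin: "finite {B. B \<subseteq> {1..10::nat} \<and> card B = 4}"
    by (rule finite_subset[of _ "Pow {1..10}"]) auto
  have f10_eq: "f10 x = elem_sym {1..10} 4 x - (\<Sum>B\<in>?excluded. \<Prod>i\<in>B. x i)"
    unfolding f10_def basis_gen_poly_def V10_bases_def elem_sym_def
    by (rule sum_diff[OF fin]) auto
  have ten: "{1..10::nat} = {1, 2, 3, 4, 5, 6, 7, 8, 9, 10}" by (auto; presburger)
  have four: "(4::nat) = Suc (Suc (Suc (Suc 0)))" by simp
  have e4: "elem_sym {1..10} 4 x = elem_sym {1, 2, 3, 4, 5, 6, 7, 8, 9, 10} (Suc (Suc (Suc (Suc 0)))) x"
    by (simp only: ten four)
  \<comment> \<open>lets the simplifier decide disequalities of the excluded sets by their sums of squares\<close>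
  have set_neq: "(A = B) = False" if "(\<Sum>i\<in>A. i\<^sup>2) \<noteq> (\<Sum>i\<in>B. (i::nat)\<^sup>2)" for A B
    using that by auto
  have excluded: "(\<Sum>B\<in>?excluded. \<Prod>i\<in>B. x i) = x 1 * x 2 * x 3 * x 4 + x 1 * x 2 * x 5 * x 6
      + x 1 * x 2 * x 7 * x 8 + x 1 * x 2 * x 9 * x 10 + x 3 * x 4 * x 5 * x 6
      + x 5 * x 6 * x 7 * x 8 + x 7 * x 8 * x 9 * x 10"
    by (simp add: set_neq mult.assoc add.assoc)
  show ?thesis
    unfolding f10_eq e4 excluded pair_form_def
    by (simp add: elem_sym_insert elem_sym_0 elem_sym_empty) algebra
qed

lemma pair_form_cong:
  assumes "\<And>k. k \<in> {1..5} \<Longrightarrow> s k = s' k" and "\<And>k. k \<in> {1..5} \<Longrightarrow> p k = p' k"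
  shows "pair_form s p = pair_form s' p'"
  using assms by (simp add: pair_form_def)

lemma pair_form_affine:
  "pair_form (s(k := a)) (p(k := b)) = pair_form (s(k := 0)) (p(k := 0))
    + a * (pair_form (s(k := 1)) (p(k := 0)) - pair_form (s(k := 0)) (p(k := 0)))
    + b * (pair_form (s(k := 0)) (p(k := 1)) - pair_form (s(k := 0)) (p(k := 0)))"
proof -
  consider "k = 1" | "k = 2" | "k = 3" | "k = 4" | "k = 5" | "k \<notin> {1..5}" by force
  then show ?thesis
    by cases (simp_all add: pair_form_def algebra_simps)
qed

lemma pair_form_symmetrize_pair:
  assumes x: "Im x > 0" and y: "Im y > 0"
    and root: "pair_form (s(k := x + y)) (p(k := x * y)) = 0"
  shows "\<exists>z. Im z > 0 \<and> pair_form (s(k := 2 * z)) (p(k := z * z)) = 0"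
proof -
  let ?F = "\<lambda>a b. pair_form (s(k := a)) (p(k := b))"
  have affine: "?F a b = ?F 0 0 + a * (?F 1 0 - ?F 0 0) + b * (?F 0 1 - ?F 0 0)" for a b
    by (rule pair_form_affine)
  have "?F 0 0 + (x + y) * (?F 1 0 - ?F 0 0) + (x * y) * (?F 0 1 - ?F 0 0) = 0"
    using root affine[of "x + y" "x * y"] by simp
  then obtain z where "Im z > 0"
    and "?F 0 0 + (2 * z) * (?F 1 0 - ?F 0 0) + (z * z) * (?F 0 1 - ?F 0 0) = 0"
    using grace_walsh_szego_2[OF x y] by blast
  then show ?thesis using affine[of "2 * z" "z * z"] by auto
qed

lemma pair_form_symmetrize:
  assumes upper: "\<forall>k\<in>{1..5}. Im (x k) > 0 \<and> Im (y k) > 0"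
    and root: "pair_form (\<lambda>k. x k + y k) (\<lambda>k. x k * y k) = 0"
  shows "\<exists>z. (\<forall>k\<in>{1..5}. Im (z k) > 0) \<and> pair_form (\<lambda>k. 2 * z k) (\<lambda>k. z k * z k) = 0"
proof -
  let ?s = "\<lambda>m z k. if k \<le> m then 2 * z k else x k + y k"
  let ?p = "\<lambda>m z k. if k \<le> m then z k * z k else x k * y k"
  have "\<exists>z. (\<forall>k\<in>{1..m}. Im (z k) > 0) \<and> pair_form (?s m z) (?p m z) = 0" if "m \<le> 5" for m
    using that
  proof (induction m)
    case 0
    have "pair_form (?s 0 x) (?p 0 x) = pair_form (\<lambda>k. x k + y k) (\<lambda>k. x k * y k)"
      by (rule pair_form_cong) auto
    then show ?case using root by auto
  next
    case (Suc m)
    then obtain z where z: "\<forall>k\<in>{1..m}. Im (z k) > 0" and "pair_form (?s m z) (?p m z) = 0"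
      by auto
    moreover have "Im (x (Suc m)) > 0" and "Im (y (Suc m)) > 0" using upper Suc.prems by auto
    moreover have "(?s m z)(Suc m := x (Suc m) + y (Suc m)) = ?s m z"
      and "(?p m z)(Suc m := x (Suc m) * y (Suc m)) = ?p m z" by auto
    ultimately obtain z' where "Im z' > 0"
      and "pair_form ((?s m z)(Suc m := 2 * z')) ((?p m z)(Suc m := z' * z')) = 0"
      using pair_form_symmetrize_pair[of "x (Suc m)" "y (Suc m)" "?s m z" "Suc m" "?p m z"] by auto
    moreover have "(?s m z)(Suc m := 2 * z') = ?s (Suc m) (z(Suc m := z'))"
      and "(?p m z)(Suc m := z' * z') = ?p (Suc m) (z(Suc m := z'))" by (auto simp: le_Suc_eq)
    ultimately show ?case using z by (intro exI[of _ "z(Suc m := z')"]) (auto simp: le_Suc_eq)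
  qed
  then obtain z where "\<forall>k\<in>{1..5}. Im (z k) > 0" and "pair_form (?s 5 z) (?p 5 z) = 0" by blast
  moreover have "pair_form (?s 5 z) (?p 5 z) = pair_form (\<lambda>k. 2 * z k) (\<lambda>k. z k * z k)"
    by (rule pair_form_cong) auto
  ultimately show ?thesis by auto
qed

definition f10_diag :: "(nat \<Rightarrow> complex) \<Rightarrow> complex" where
  "f10_diag z = 4 * (z 1 + z 2 + z 3 + z 4 + z 5)
      * (z 1 * z 2 * z 3 + z 1 * z 2 * z 4 + z 1 * z 2 * z 5 + z 1 * z 3 * z 4 + z 1 * z 3 * z 5
         + z 1 * z 4 * z 5 + z 2 * z 3 * z 4 + z 2 * z 3 * z 5 + z 2 * z 4 * z 5 + z 3 * z 4 * z 5)
    + (z 2 * z 4)\<^sup>2 + (z 2 * z 5)\<^sup>2 + (z 3 * z 5)\<^sup>2"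

definition diag_partner :: "(nat \<Rightarrow> complex) \<Rightarrow> complex" where
  "diag_partner z = (z 1 + z 2 + z 3 + z 4 + z 5)
      * (z 1 * z 2 + z 1 * z 3 + z 1 * z 4 + z 1 * z 5 + z 2 * z 3
         + z 2 * z 4 + z 2 * z 5 + z 3 * z 4 + z 3 * z 5 + z 4 * z 5)"

lemma pair_form_diag: "pair_form (\<lambda>k. 2 * z k) (\<lambda>k. z k * z k) = f10_diag z"
  unfolding pair_form_def f10_diag_def by algebra

section \<open>Hermitian sums of squares\<close>

definition lin_comb :: "int list \<Rightarrow> complex list \<Rightarrow> complex" where
  "lin_comb c v = (\<Sum>(a, x)\<leftarrow>zip c v. of_int a * x)"

definition bilin :: "int list list \<Rightarrow> complex list \<Rightarrow> complex list \<Rightarrow> complex" where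
  "bilin A u v = (\<Sum>(row, x)\<leftarrow>zip A u. x * lin_comb row v)"

definition weighted_sum_squares :: "real list \<Rightarrow> int list list \<Rightarrow> complex list \<Rightarrow> real" where
  "weighted_sum_squares d L v = (\<Sum>(c, row)\<leftarrow>zip d L. c * (cmod (lin_comb row v))\<^sup>2)"

lemma of_real_weighted_sum_squares:
  "of_real (weighted_sum_squares d L v)
    = (\<Sum>(c, row)\<leftarrow>zip d L. of_real c * (cnj (lin_comb row v) * lin_comb row v))"
  unfolding weighted_sum_squares_def sum_list_of_real[symmetric] map_map
  by (intro arg_cong[where f = sum_list] map_cong)
    (auto simp: complex_norm_square mult.commute simp del: of_real_power)

lemma weighted_sum_squares_nonneg:
  "\<forall>c\<in>set d. c \<ge> 0 \<Longrightarrow> weighted_sum_squares d L v \<ge> 0"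
  unfolding weighted_sum_squares_def by (intro sum_list_nonneg) (auto dest: set_zip_leftD)

lemma weighted_sum_squares_eq_0_imp_lin_comb_eq_0:
  assumes "weighted_sum_squares d L v = 0" and "\<forall>c\<in>set d. c \<ge> 0"
    and "i < length d" and "i < length L" and "d ! i > 0"
  shows "lin_comb (L ! i) v = 0"
proof -
  let ?term = "\<lambda>(c, row). c * (cmod (lin_comb row v))\<^sup>2"
  have "\<forall>t\<in>set (map ?term (zip d L)). t = 0"
    using assms(1,2) unfolding weighted_sum_squares_def
    by (subst sum_list_nonneg_eq_0_iff[symmetric]) (auto dest: set_zip_leftD)
  moreover have "(d ! i, L ! i) \<in> set (zip d L)"
    using assms(3,4) by (metis length_zip min_less_iff_conj nth_mem nth_zip)
  ultimately have "d ! i * (cmod (lin_comb (L ! i) v))\<^sup>2 = 0" by fastforce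
  then show ?thesis using assms(5) by simp
qed

lemma nonneg_weight_eq_0_if_sum_diff_cnj_eq_0:
  fixes z :: "nat \<Rightarrow> complex" and r :: "nat \<Rightarrow> real"
  assumes sum: "(\<Sum>k\<in>K. (z k - cnj (z k)) * of_real (r k)) = 0" and "finite K"
    and upper: "\<And>k. k \<in> K \<Longrightarrow> Im (z k) > 0" and nonneg: "\<And>k. k \<in> K \<Longrightarrow> r k \<ge> 0"
    and "k \<in> K"
  shows "r k = 0"
proof -
  have "(\<Sum>k\<in>K. Im (z k) * r k) = 0"
    using arg_cong[OF sum, of Im] by (simp add: Im_sum mult.assoc flip: sum_distrib_left)
  then have "Im (z k) * r k = 0"
    using \<open>finite K\<close> \<open>k \<in> K\<close> upper nonneg
    by (subst (asm) sum_nonneg_eq_0_iff) (auto simp: less_imp_le)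
  then show ?thesis using upper[OF \<open>k \<in> K\<close>] by simp
qed

section \<open>The diagonal polynomial has no zeros in the upper half-plane\<close>

text \<open>The data of the identity \<open>bezoutian_identity\<close> below: the Gram matrix \<open>bez_gram k\<close> of
  the \<open>k\<close>-th term with respect to the monomial vector \<open>bez_monomials k\<close>, and a factorisation
  \<open>bez_gram k = L\<^sup>T diag d L\<close> with \<open>d = bez_weights k > 0\<close> and \<open>L = bez_factor k\<close>
  upper triangular, which exhibits \<open>bez_gram k\<close> as positive semidefinite.\<close>

definition bez_monomials :: "nat \<Rightarrow> (nat \<Rightarrow> complex) \<Rightarrow> complex list" where
  "bez_monomials k z =
  (if k = 1 then
     [z 1 * z 2 * z 5,
      z 1 * z 3 * z 5,
      z 2 * z 2 * z 4,
      z 2 * z 2 * z 5,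
      z 1 * z 2 * z 3 + z 2 * z 2 * z 3 + z 2 * z 3 * z 3,
      z 2 * z 3 * z 4,
      z 2 * z 3 * z 5,
      z 2 * z 4 * z 4,
      z 2 * z 4 * z 5,
      z 2 * z 5 * z 5,
      z 3 * z 3 * z 5,
      z 1 * z 3 * z 4 + z 3 * z 3 * z 4 + z 3 * z 4 * z 4,
      z 3 * z 4 * z 5,
      z 3 * z 5 * z 5,
      z 1 * z 4 * z 5 + z 4 * z 4 * z 5 + z 4 * z 5 * z 5,
      z 1 * z 2 * z 4]
   else if k = 2 then
     [z 1 * z 2 * z 4,
      z 1 * z 2 * z 5,
      z 1 * z 1 * z 3 + z 1 * z 2 * z 3 + z 1 * z 3 * z 3 + z 1 * z 3 * z 4,
      z 1 * z 3 * z 5,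
      - z 1 * z 1 * z 3 + z 1 * z 1 * z 4 - z 1 * z 2 * z 3 - z 1 * z 3 * z 3 + z 1 * z 4 * z 4 + z 1 * z 4 * z 5,
      z 1 * z 1 * z 3 - z 1 * z 1 * z 4 + z 1 * z 1 * z 5 + z 1 * z 2 * z 3 + z 1 * z 3 * z 3 - z 1 * z 4 * z 4 + z 1 * z 5 * z 5,
      z 2 * z 3 * z 4,
      z 2 * z 3 * z 5,
      z 2 * z 4 * z 4,
      z 2 * z 4 * z 5,
      z 2 * z 5 * z 5,
      z 3 * z 3 * z 5,
      - z 1 * z 1 * z 3 - z 1 * z 2 * z 3 - z 1 * z 3 * z 3 + z 3 * z 3 * z 4 + z 3 * z 4 * z 4,
      z 3 * z 4 * z 5,
      z 3 * z 5 * z 5,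
      z 1 * z 1 * z 3 - z 1 * z 1 * z 4 + z 1 * z 2 * z 3 + z 1 * z 3 * z 3 - z 1 * z 4 * z 4 + z 4 * z 4 * z 5 + z 4 * z 5 * z 5]
   else if k = 3 then
     [z 1 * z 1 * z 2 + z 1 * z 2 * z 2 + z 1 * z 2 * z 3,
      z 1 * z 2 * z 4,
      z 1 * z 2 * z 5,
      z 1 * z 3 * z 5,
      z 1 * z 1 * z 4 + z 1 * z 3 * z 4 + z 1 * z 4 * z 4 + z 1 * z 4 * z 5,
      - z 1 * z 1 * z 4 + z 1 * z 1 * z 5 - z 1 * z 3 * z 4 - z 1 * z 4 * z 4 + z 1 * z 5 * z 5,
      z 2 * z 2 * z 4,
      z 2 * z 2 * z 5,
      z 2 * z 3 * z 4,
      z 2 * z 3 * z 5,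
      z 2 * z 4 * z 4,
      z 2 * z 4 * z 5,
      z 2 * z 5 * z 5,
      z 3 * z 4 * z 5,
      z 3 * z 5 * z 5,
      - z 1 * z 1 * z 4 - z 1 * z 3 * z 4 - z 1 * z 4 * z 4 + z 4 * z 4 * z 5 + z 4 * z 5 * z 5]
   else if k = 4 then
     [z 1 * z 1 * z 2 + z 1 * z 2 * z 2 + z 1 * z 2 * z 3,
      z 1 * z 2 * z 4,
      z 1 * z 2 * z 5,
      - z 1 * z 1 * z 2 + z 1 * z 1 * z 3 - z 1 * z 2 * z 2 + z 1 * z 3 * z 3 + z 1 * z 3 * z 4,
      z 1 * z 3 * z 5,
      z 1 * z 1 * z 5 + z 1 * z 4 * z 5 + z 1 * z 5 * z 5,
      z 2 * z 2 * z 4,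
      z 2 * z 2 * z 5,
      - z 1 * z 1 * z 2 - z 1 * z 2 * z 2 + z 2 * z 2 * z 3 + z 2 * z 3 * z 3,
      z 2 * z 3 * z 4,
      z 2 * z 3 * z 5,
      z 2 * z 4 * z 5,
      z 2 * z 5 * z 5,
      z 3 * z 3 * z 5,
      z 3 * z 4 * z 5,
      z 3 * z 5 * z 5]
   else if k = 5 then
     [z 1 * z 1 * z 2 + z 1 * z 2 * z 2 + z 1 * z 2 * z 3,
      z 1 * z 2 * z 4,
      z 1 * z 2 * z 5,
      - z 1 * z 1 * z 2 + z 1 * z 1 * z 3 - z 1 * z 2 * z 2 + z 1 * z 3 * z 3 + z 1 * z 3 * z 4,
      z 1 * z 3 * z 5,
      z 1 * z 1 * z 2 - z 1 * z 1 * z 3 + z 1 * z 1 * z 4 + z 1 * z 2 * z 2 - z 1 * z 3 * z 3 + z 1 * z 4 * z 4 + z 1 * z 4 * z 5,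
      z 2 * z 2 * z 4,
      z 2 * z 2 * z 5,
      - z 1 * z 1 * z 2 - z 1 * z 2 * z 2 + z 2 * z 2 * z 3 + z 2 * z 3 * z 3,
      z 2 * z 3 * z 4,
      z 2 * z 3 * z 5,
      z 2 * z 4 * z 4,
      z 2 * z 4 * z 5,
      z 3 * z 3 * z 5,
      z 1 * z 1 * z 2 - z 1 * z 1 * z 3 + z 1 * z 2 * z 2 - z 1 * z 3 * z 3 + z 3 * z 3 * z 4 + z 3 * z 4 * z 4,
      z 3 * z 4 * z 5]
   else [])"

definition bez_gram :: "nat \<Rightarrow> int list list" where
  "bez_gram k =
  (if k = 1 then
     [[320, 160, 160, 240, 160, 423, 600, 146, 596, 240, 144, 104, 424, 160, 160, 160],
      [160, 320, 105, 144, 160, 434, 600, 106, 442, 160, 240, 160, 604, 240, 160, 114],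
      [160, 105, 240, 160, 160, 536, 426, 200, 542, 144, 98, 132, 387, 103, 134, 240],
      [240, 144, 160, 240, 160, 422, 544, 138, 536, 200, 111, 87, 383, 145, 140, 160],
      [160, 160, 160, 160, 320, 640, 640, 144, 432, 136, 160, 160, 414, 136, 102, 160],
      [423, 434, 536, 422, 640, 1928, 1529, 548, 1455, 385, 426, 640, 1496, 376, 422, 604],
      [600, 600, 426, 544, 640, 1529, 1954, 409, 1467, 535, 544, 440, 1464, 536, 424, 451],
      [146, 106, 200, 138, 144, 548, 409, 240, 546, 120, 90, 160, 426, 88, 160, 240],
      [596, 442, 542, 536, 432, 1455, 1467, 546, 1932, 540, 394, 432, 1522, 424, 640, 600],
      [240, 160, 144, 200, 136, 385, 535, 120, 540, 240, 144, 104, 432, 160, 160, 144],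
      [144, 240, 98, 111, 160, 426, 544, 90, 394, 144, 240, 160, 544, 200, 140, 106],
      [104, 160, 132, 87, 160, 640, 440, 160, 432, 104, 160, 320, 640, 136, 160, 160],
      [424, 604, 387, 383, 414, 1496, 1464, 426, 1522, 432, 544, 640, 1928, 540, 640, 434],
      [160, 240, 103, 145, 136, 376, 536, 88, 424, 160, 200, 136, 540, 240, 160, 104],
      [160, 160, 134, 140, 102, 422, 424, 160, 640, 160, 140, 160, 640, 160, 320, 160],
      [160, 114, 240, 160, 160, 604, 451, 240, 600, 144, 106, 160, 434, 104, 160, 320]]
   else if k = 2 then
     [[400, 160, 668, 431, 666, 160, 248, 102, 120, 248, 32, 126, 188, 469, 113, 186],
      [160, 400, 441, 656, 660, 320, 112, 233, 32, 248, 120, 185, 121, 465, 175, 180],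
      [668, 441, 1920, 1470, 1498, 424, 660, 397, 192, 488, 119, 438, 640, 1496, 368, 434],
      [431, 656, 1470, 1920, 1486, 640, 416, 600, 88, 480, 208, 552, 408, 1440, 528, 424],
      [666, 660, 1498, 1486, 1920, 640, 483, 438, 184, 698, 192, 414, 424, 1486, 432, 640],
      [160, 320, 424, 640, 640, 320, 111, 177, 24, 188, 80, 152, 104, 424, 160, 160],
      [248, 112, 660, 416, 483, 111, 400, 160, 120, 252, 40, 160, 320, 660, 136, 192],
      [102, 233, 397, 600, 438, 177, 160, 400, 28, 240, 120, 240, 160, 600, 236, 184],
      [120, 32, 192, 88, 184, 24, 120, 28, 80, 120, 0, 28, 80, 176, 24, 80],
      [248, 248, 488, 480, 698, 188, 252, 240, 120, 480, 120, 184, 192, 680, 176, 320],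
      [32, 120, 119, 208, 192, 80, 40, 120, 0, 120, 80, 84, 40, 200, 80, 80],
      [126, 185, 438, 552, 414, 152, 160, 240, 28, 184, 84, 240, 160, 552, 200, 144],
      [188, 121, 640, 408, 424, 104, 320, 160, 80, 192, 40, 160, 320, 640, 128, 160],
      [469, 465, 1496, 1440, 1486, 424, 660, 600, 176, 680, 200, 552, 640, 1936, 536, 640],
      [113, 175, 368, 528, 432, 160, 136, 236, 24, 176, 80, 200, 128, 536, 240, 160],
      [186, 180, 434, 424, 640, 160, 192, 184, 80, 320, 80, 144, 160, 640, 160, 320]]
   else if k = 3 then
     [[320, 640, 640, 160, 424, 160, 160, 160, 160, 160, 144, 422, 137, 112, 56, 104],
      [640, 1912, 1480, 440, 1496, 432, 536, 434, 596, 410, 540, 1459, 368, 424, 152, 424],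
      [640, 1480, 1920, 656, 1496, 640, 424, 543, 415, 591, 375, 1455, 537, 464, 216, 432],
      [160, 440, 656, 400, 660, 320, 112, 176, 120, 224, 120, 480, 176, 240, 120, 180],
      [424, 1496, 1496, 660, 1920, 640, 373, 408, 432, 432, 424, 1504, 416, 660, 200, 640],
      [160, 432, 640, 320, 640, 320, 105, 143, 112, 168, 104, 432, 160, 180, 80, 160],
      [160, 536, 424, 112, 373, 105, 240, 160, 240, 160, 200, 536, 136, 140, 48, 128],
      [160, 434, 543, 176, 408, 143, 160, 240, 160, 240, 144, 544, 200, 176, 84, 136],
      [160, 596, 415, 120, 432, 112, 240, 160, 320, 160, 240, 596, 136, 160, 56, 160],
      [160, 410, 591, 224, 432, 168, 160, 240, 160, 400, 144, 600, 236, 224, 120, 176],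
      [144, 540, 375, 120, 424, 104, 200, 144, 240, 144, 240, 552, 112, 160, 48, 160],
      [422, 1459, 1455, 480, 1504, 432, 536, 544, 596, 600, 552, 1968, 544, 656, 208, 640],
      [137, 368, 537, 176, 416, 160, 136, 200, 136, 236, 112, 544, 240, 176, 80, 160],
      [112, 424, 464, 240, 660, 180, 140, 176, 160, 224, 160, 656, 176, 400, 120, 320],
      [56, 152, 216, 120, 200, 80, 48, 84, 56, 120, 48, 208, 80, 120, 80, 80],
      [104, 424, 432, 180, 640, 160, 128, 136, 160, 176, 160, 640, 160, 320, 80, 320]]
   else if k = 4 then
     [[1920, 656, 1496, 640, 1496, 424, 208, 424, 640, 656, 1504, 438, 408, 416, 424, 384],
      [656, 400, 654, 160, 432, 160, 120, 182, 176, 232, 474, 224, 168, 112, 112, 120],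
      [1496, 654, 1928, 432, 1488, 640, 208, 536, 424, 464, 1456, 604, 548, 384, 416, 424],
      [640, 160, 432, 320, 640, 160, 48, 104, 160, 160, 432, 96, 120, 160, 160, 144],
      [1496, 432, 1488, 640, 1912, 640, 152, 368, 432, 432, 1448, 408, 432, 536, 596, 540],
      [424, 160, 640, 160, 640, 320, 56, 132, 104, 112, 424, 160, 160, 140, 160, 160],
      [208, 120, 208, 48, 152, 56, 80, 80, 80, 120, 212, 120, 80, 52, 64, 56],
      [424, 182, 536, 104, 368, 132, 80, 240, 160, 176, 536, 240, 200, 104, 144, 144],
      [640, 176, 424, 160, 432, 104, 80, 160, 320, 320, 640, 172, 144, 160, 160, 136],
      [656, 232, 464, 160, 432, 112, 120, 176, 320, 400, 656, 216, 168, 160, 160, 144],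
      [1504, 474, 1456, 432, 1448, 424, 212, 536, 640, 656, 1952, 592, 536, 544, 592, 536],
      [438, 224, 604, 96, 408, 160, 120, 240, 172, 216, 592, 400, 240, 144, 160, 160],
      [408, 168, 548, 120, 432, 160, 80, 200, 144, 168, 536, 240, 240, 144, 160, 160],
      [416, 112, 384, 160, 536, 140, 52, 104, 160, 160, 544, 144, 144, 240, 240, 200],
      [424, 112, 416, 160, 596, 160, 64, 144, 160, 160, 592, 160, 160, 240, 320, 240],
      [384, 120, 424, 144, 540, 160, 56, 144, 136, 144, 536, 160, 160, 200, 240, 240]]
   else if k = 5 then
     [[1920, 1478, 664, 1506, 664, 434, 430, 193, 640, 1480, 695, 408, 438, 184, 432, 472],
      [1478, 1920, 656, 1478, 424, 640, 530, 208, 424, 1438, 479, 550, 606, 88, 424, 416],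
      [664, 656, 400, 432, 160, 160, 176, 120, 184, 464, 248, 176, 232, 24, 112, 104],
      [1506, 1478, 432, 1920, 664, 640, 368, 121, 434, 1480, 496, 430, 406, 200, 640, 656],
      [664, 424, 160, 664, 400, 160, 112, 32, 184, 472, 256, 128, 104, 120, 184, 240],
      [434, 640, 160, 640, 160, 320, 130, 48, 114, 426, 112, 160, 160, 40, 160, 160],
      [430, 530, 176, 368, 112, 130, 240, 80, 160, 532, 184, 200, 240, 32, 128, 136],
      [193, 208, 120, 121, 32, 48, 80, 80, 80, 200, 120, 80, 120, -4, 40, 40],
      [640, 424, 184, 434, 184, 114, 160, 80, 320, 640, 320, 148, 176, 80, 160, 184],
      [1480, 1438, 464, 1480, 472, 426, 532, 200, 640, 1928, 688, 552, 600, 184, 640, 656],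
      [695, 479, 248, 496, 256, 112, 184, 120, 320, 688, 488, 184, 240, 120, 192, 248],
      [408, 550, 176, 430, 128, 160, 200, 80, 148, 552, 184, 240, 240, 32, 160, 160],
      [438, 606, 232, 406, 104, 160, 240, 120, 176, 600, 240, 240, 400, 32, 160, 160],
      [184, 88, 24, 200, 120, 40, 32, -4, 80, 184, 120, 32, 32, 80, 80, 120],
      [432, 424, 112, 640, 184, 160, 128, 40, 160, 640, 192, 160, 160, 80, 320, 320],
      [472, 416, 104, 656, 240, 160, 136, 40, 184, 656, 248, 160, 160, 120, 320, 400]]
   else [])"

definition bez_weights :: "nat \<Rightarrow> real list" where
  "bez_weights k =
  (if k = 1 then
     [1/320,
      1/960,
      1/1450560,
      1/44443707840,
      1/372006482400,
      1/53021599446160,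
      1/7005415334506618047400,
      1/22845057925751501351855669280,
      1/16986009165765436945742316504856,
      1/60923474135276788721149115526874657008,
      1/65676239345951907712808773063194171466144,
      1/4013537286967335577817833419028269726138992,
      1/259085443181583193739041654169838524464521032352,
      1/68779854500929693438350907783353491554391488397823,
      1/3146382585844064218335035330119846577036662363570229,
      12471070887697691922543292048/256300499336355108241938191]
   else if k = 2 then
     [1/400,
      1/8400,
      1/2016717360,
      1/3777269626168189040,
      1/327804479021362074472,
      1/69432992236903343252664512,
      1/384604401695234738129473683264,
      1/561262614044900651550267602682015768,
      1/441588790338821287914676415676864621,
      1/4921366562752101166631077111192307919078,
      1/2220890296945776648218791295959661498062378,
      1/1751302538903780826931708533592106008031088311,
      4/445660971421690678562165462183505879176000897261,
      2/4234729308114878238091668276819109810969802796221,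
      2/32859298426841295703840064276871570336431027497587,
      133217818171138177023176272/12805061657092032507966159]
   else if k = 3 then
     [1/320,
      1/632,
      1/3599240,
      1/18578274560,
      1/300508696363520,
      1/790270808214624768,
      1/1755548386218211815936,
      1/1110911893654810843349122560,
      1/759362757122501900928955538085,
      1/447976683730077923790348162043907584,
      1/640311869575429195597205093724615275008,
      1/1259422473274000236745906748928770443787600,
      1/8532289969789663112822772011073357191207422150,
      1/1057267522182941111385298785275899175366083945569,
      4/20363023581417773011407225265640225396674354295529,
      197166050070752130307145949/21371232220463939254404458]
   else if k = 4 then
     [1/480,
      1/633120,
      1/17990737920,
      1/3930532945920,
      1/6273254019455808,
      1/1386072971714457642,
      1/44345355876452138277,
      2/12481501707566330497311,
      1/1929168001877319346052,
      1/182944415858460518300164,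
      4/386985576433696727967493,
      1/79063681689477399131530292769226,
      4/79579825498677268617155277770364251,
      4/5120650422373098156479168980551594655,
      2/669850865901595446624142412515529488235,
      3919228462252710692640/113046361056513427141]
   else if k = 5 then
     [1/1920,
      1/720919680,
      1/1264820160929,
      1/1295340533249686,
      1/991444438122593070,
      1/37868129093521365995,
      1/1137010580782697281994952,
      1/2627988404219133193988866680,
      1/5399328838602755995686774400620,
      1/5063029034371921382828349248717044,
      1/7671707028176414308674165601971735841,
      4/6395175148801841518768958462338393684187,
      4/1485611984479202127205320122508302083454383,
      4/178355545745112063140028446266627897232442007,
      4/535522019438604283158820191098355932086689941,
      771222066172043361382484/18677437473253022696951]
   else [])"

definition bez_factor :: "nat \<Rightarrow> int list list" where
  "bez_factor k =
  (if k = 1 then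
     [[320, 160, 160, 240, 160, 423, 600, 146, 596, 240, 144, 104, 424, 160, 160, 160],
      [0, 480, 50, 48, 160, 445, 600, 66, 288, 80, 336, 216, 784, 320, 160, 68],
      [0, 0, 15110, 3600, 6880, 28927, 9096, 11862, 21984, 1904, 816, 6600, 12880, 608, 4384, 15020],
      [0, 0, 0, 1470672, 451040, 323625, 1251880, -128106, 605612, 340720, -478236, -549396, -186324, 226380, 33840, -20448],
      [0, 0, 0, 0, 8094400, 9828150, 8463392, 231570, -1122128, -451396, 1515855, 2126583, 557682, -115563, -1185885, -108720],
      [0, 0, 0, 0, 0, 131008103, 17664136, 33460614, 48766556, 866804, 10952494, 88472118, 122176533, 2204358, 32374219, 26093200],
      [0, 0, 0, 0, 0, 0, 1069462907116, 44607387520, 156352780786, 153568226982, 224144677815, 40829518159, 328117849496, 181482637941, 76969438825, 56797531890],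
      [0, 0, 0, 0, 0, 0, 0, 1068062191486254, 966224446611912, -231684193844564, -345095426688585, -326648603498545, -144435371497426, -295047576970499, 429170581092567, 485082346141520],
      [0, 0, 0, 0, 0, 0, 0, 0, 71566095921417338, 9425947912797350, 5516359533639835, 4487436976112555, 45696893400470646, 5637728765337065, 41268563474345139, 1929973417534858],
      [0, 0, 0, 0, 0, 0, 0, 0, 0, 47293867415602768012, 1006096228883917140, -2595926527710585268, -2766667485152982901, 675542709169531408, -1998180145343783949, 1056076569649997672],
      [0, 0, 0, 0, 0, 0, 0, 0, 0, 0, 1388684050065328187512, -313109873886494840488, 688808615610557450601, 283941001438434848164, -61778136856465780131, 68563441392364171728],
      [0, 0, 0, 0, 0, 0, 0, 0, 0, 0, 0, 11560692403080530254664, 15607692669163597095481, 1260603667413587833884, -126265176975427926987, -4285524462183722509384],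
      [0, 0, 0, 0, 0, 0, 0, 0, 0, 0, 0, 0, 5602723309041285431376717, 1106533284102066213982700, 3461727144826598259978617, -727901789175942903157344],
      [0, 0, 0, 0, 0, 0, 0, 0, 0, 0, 0, 0, 0, 49104587685019208516522476, -2327689799443249840666535, 3253705248033890052479034],
      [0, 0, 0, 0, 0, 0, 0, 0, 0, 0, 0, 0, 0, 0, 256300499336355108241938191, 29256140210907675342766458],
      [0, 0, 0, 0, 0, 0, 0, 0, 0, 0, 0, 0, 0, 0, 0, 1]]
   else if k = 2 then
     [[400, 160, 668, 431, 666, 160, 248, 102, 120, 248, 32, 126, 188, 469, 113, 186],
      [0, 1680, 869, 2418, 1968, 1280, 64, 961, -80, 744, 536, 673, 229, 1387, 649, 528],
      [0, 0, 1200427, 840138, 306072, 40960, 401888, 213767, -208, -5256, 16984, 265367, 507947, 956393, 188411, 115512],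
      [0, 0, 0, 39332562769, 7142690678, 7882431840, -3559422264, 11947778614, -1746359928, 77198632, 1167128096, 10751862718, -6923423680, 13154169927, 13534445939, 2254463798],
      [0, 0, 0, 0, 308364491656, 55908024096, 874837111, -12771696360, 6672432344, 118447502002, 8885161044, -14956754580, -7089719670, 223384842278, 39987114068, 196464097628],
      [0, 0, 0, 0, 0, 48684395474368, 1659795651199, -53245515749219, -13262082456936, -63932126923292, -26772503117504, -37406268322880, -1076399517480, -85465755255192, -32781740808040, -50508914225264],
      [0, 0, 0, 0, 0, 0, 7899952293702123, 2892077138532073, 2186151106230392, 4620332627523204, 701432505996064, 1700856458842848, 4575989949982184, 8856004772050392, 1795471567840280, 2553284596262128],
      [0, 0, 0, 0, 0, 0, 0, 8880791193073749577, -900654107639657632, 808982349830741418, 1236686191627731604, 1686195498376240860, 1163386861744726238, 3495692269397485074, 2090163372577763516, 411473204985166708],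
      [0, 0, 0, 0, 0, 0, 0, 0, 3381234519561626964, 1715294572116526636, -1469377167921401740, -1592615923879686749, -205386417288542094, -1424977462003678572, -1484826119507961260, 363502886622820700],
      [0, 0, 0, 0, 0, 0, 0, 0, 0, 684938353906681187548, 146165524566420379247, 7387128396213659965, 16825596056273080557, 23646815052881346975, -106169081010148600559, 57439476885447261386],
      [0, 0, 0, 0, 0, 0, 0, 0, 0, 0, 6484934839109213782547, -320189850463067734617, -1406134869537505777253, -2208831748028386350403, 132654465657800359967, -377156639065894905582],
      [0, 0, 0, 0, 0, 0, 0, 0, 0, 0, 0, 270057075722960378721613, 62894842648348892149120, 251876983023204109377066, 89868336805096639994298, -52618467557673334083196],
      [0, 0, 0, 0, 0, 0, 0, 0, 0, 0, 0, 0, 1650247342079918606641697, 3017075157491699120124611, 387564327030149771943393, 478147421293073184694666],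
      [0, 0, 0, 0, 0, 0, 0, 0, 0, 0, 0, 0, 0, 10264471755555289766829172, 2130878935282146310849406, 2028542040614031177038607],
      [0, 0, 0, 0, 0, 0, 0, 0, 0, 0, 0, 0, 0, 0, 25610123314184065015932318, -7694690825675608915176095],
      [0, 0, 0, 0, 0, 0, 0, 0, 0, 0, 0, 0, 0, 0, 0, 1]]
   else if k = 3 then
     [[320, 640, 640, 160, 424, 160, 160, 160, 160, 160, 144, 422, 137, 112, 56, 104],
      [0, 632, 200, 120, 648, 112, 216, 114, 276, 90, 252, 615, 94, 200, 40, 216],
      [0, 0, 45560, 23544, 34992, 22480, 2816, 14767, 605, 19159, 573, 32894, 18427, 13960, 7216, 12296],
      [0, 0, 0, 1631104, 1094192, 816480, -312464, -253338, -186370, 18054, -40962, -716936, -351793, 623120, 423736, 74656],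
      [0, 0, 0, 0, 294778208, 47429600, -70792640, -50493830, -59018110, -60765350, -28888862, 37421684, -20728981, 136724624, -10524168, 159840368],
      [0, 0, 0, 0, 0, 5361799392, -878597104, -4470384414, -469372486, -5720866958, -1455804710, -9997961956, -3171310845, -7015459504, -2523211272, -5244862512],
      [0, 0, 0, 0, 0, 0, 327417767408, 44816392662, 255425082878, 74417818726, 173251212574, 400615040204, 35552079525, 212397211568, 13542115464, 137455591056],
      [0, 0, 0, 0, 0, 0, 0, 212059332952770, 31951676132522, 109669567635298, 32074894364298, 88203062955940, 61893209826167, 68167509896528, 44894463228120, -56119705963216],
      [0, 0, 0, 0, 0, 0, 0, 0, 7161795206548421, 884636730661609, 2626780023166989, 4695984856868350, 733243664500796, 1101031647771704, 714891920332890, 2358565800166337],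
      [0, 0, 0, 0, 0, 0, 0, 0, 0, 7818861591442679488, 180625938664484144, 1779039466485581182, 1188694852599933193, 1400777324469505104, 1217389120508671688, 1090546373923771040],
      [0, 0, 0, 0, 0, 0, 0, 0, 0, 0, 163786469957778982832, 141507957982533216526, -27312585047374238127, 7514408366024144336, -18062475901860895480, 40819460077495911072],
      [0, 0, 0, 0, 0, 0, 0, 0, 0, 0, 0, 15378834083165175312350, 2955594357376939571039, 2984924081627767881200, 253857854315286714944, 3444270423453028728424],
      [0, 0, 0, 0, 0, 0, 0, 0, 0, 0, 0, 0, 554807336086013656344269, 5326445526655801671000, 34478082666851316676224, 9515918174873348503279],
      [0, 0, 0, 0, 0, 0, 0, 0, 0, 0, 0, 0, 0, 7622592229162805116710804, 2535881373060482607547330, 2372064160077951821414537],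
      [0, 0, 0, 0, 0, 0, 0, 0, 0, 0, 0, 0, 0, 0, 10685616110231969627202229, 657047124820216372990013],
      [0, 0, 0, 0, 0, 0, 0, 0, 0, 0, 0, 0, 0, 0, 0, 1]]
   else if k = 4 then
     [[960, 328, 748, 320, 748, 212, 104, 212, 320, 328, 752, 219, 204, 208, 212, 192],
      [0, 10552, 8572, -3520, -4748, 908, 2936, 2228, -2560, 472, -2392, 4461, 1716, -1808, -1972, -672],
      [0, 0, 3409920, -100288, 2039972, 1568764, 32616, 925768, -211072, -282392, 1669956, 1067473, 1091428, 445008, 592668, 706448],
      [0, 0, 0, 18442816, 26918596, 6917852, -1028952, -4216696, -14650496, -12279256, -15626652, -4101991, -79996, 2932944, 2345724, 3452944],
      [0, 0, 0, 0, 1360584852, 420417388, 70543832, -100294864, 177067744, 186836712, 810832916, 33342893, 17334492, 589071728, 772647884, 608651712],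
      [0, 0, 0, 0, 0, 8149865668, 16192052, -5342193100, -227565836, 29095008, -13122316708, -5309634079, -4890069666, -5564423134, -6529836538, -5494203150],
      [0, 0, 0, 0, 0, 0, 43529901162, 22557470911, 17417461240, 42726274816, 44901906814, 49450085430, 26186408377, 8882827396, 18478650838, 10553335304],
      [0, 0, 0, 0, 0, 0, 0, 573467955331, 173180351326, 132720057814, 534700948009, 252041115426, 171095755948, -193750333058, 77387513935, 131718307619],
      [0, 0, 0, 0, 0, 0, 0, 0, 208570356904, 262928052972, 303624790614, 120638868791, 102855247408, 134329136802, -54538551100, 5174604616],
      [0, 0, 0, 0, 0, 0, 0, 0, 0, 2942647350044, 88381527446, -209097270683, 56051426252, -299107737026, -103008507408, 216993587252],
      [0, 0, 0, 0, 0, 0, 0, 0, 0, 0, 4167834096953, 121428390437, 355847860421, 915649587376, 657728992409, 632290352359],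
      [0, 0, 0, 0, 0, 0, 0, 0, 0, 0, 0, 92087225911078507, 7075712936169292, 1783607022246328, -5093332555585198, -2933693685768202],
      [0, 0, 0, 0, 0, 0, 0, 0, 0, 0, 0, 0, 864178768676573393, 40813185927379252, 48527835358985566, 94856184764772649],
      [0, 0, 0, 0, 0, 0, 0, 0, 0, 0, 0, 0, 0, 5925452704901556335, 5065118712181084601, 2479549273388202670],
      [0, 0, 0, 0, 0, 0, 0, 0, 0, 0, 0, 0, 0, 0, 113046361056513427141, 19653067354654642585],
      [0, 0, 0, 0, 0, 0, 0, 0, 0, 0, 0, 0, 0, 0, 0, 1]]
   else if k = 5 then
     [[1920, 1478, 664, 1506, 664, 434, 430, 193, 640, 1480, 695, 408, 438, 184, 432, 472],
      [0, 750958, 139064, 305946, -83656, 293674, 191030, 57053, -65920, 286760, -53765, 226488, 258078, -51496, 87792, 50552],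
      [0, 0, 13474204, -13877834, -5021680, -4387548, -897174, 3965880, -2310838, -9682550, 1691251, -825030, 2885768, -2787918, -5100404, -6475578],
      [0, 0, 0, 769078772, 208140076, 213583069, -101385088, -18665724, -110117271, 153589547, -13081713, 8092916, -25966443, 79059026, 350211448, 325520582],
      [0, 0, 0, 0, 10313059980, -745296069, -174213760, -901789658, -3505397753, -6698599311, 1751927893, 827319712, -182443725, 2558989362, -3050917308, 443864746],
      [0, 0, 0, 0, 0, 44062339403, -27108025020, -2329094069, 3173056021, -76750151213, -11908557766, -24116784544, -25767304175, -1200886444, -43954360774, -37030545502],
      [0, 0, 0, 0, 0, 0, 8601529833928, 2800315717385, 3374969367224, 9727643751438, 4567654253306, 4169111186990, 7277875174476, 1088884025436, -29256532680, 1500425532620],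
      [0, 0, 0, 0, 0, 0, 0, 305525697748935, 131062048039352, 226538106751178, 331270424142042, 109825520033178, 227509888122172, -77136068921036, 45242189918456, 68634948783060],
      [0, 0, 0, 0, 0, 0, 0, 0, 17672257614937652, 33861165349167218, 19097781432972717, 5800116968765898, 7707864501401332, 7744559689318084, 10756732027440596, 13420624069214400],
      [0, 0, 0, 0, 0, 0, 0, 0, 0, 572991764231904994, -102039071552564269, 135497233721734198, 10746787102604328, -39286285492036556, 94557865724959204, 78787000801243360],
      [0, 0, 0, 0, 0, 0, 0, 0, 0, 0, 26777721800104165553, -869373647345819804, 1099020720407022374, 7548132755828742830, 679205224686730632, 5693120514421988274],
      [0, 0, 0, 0, 0, 0, 0, 0, 0, 0, 0, 238824467463731893579, 46831232449756656746, -22199622124348136645, -41073030431170486238, -71250733404906742663],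
      [0, 0, 0, 0, 0, 0, 0, 0, 0, 0, 0, 0, 6220518359178623727277, 260537238472559443101, 1717314509456605286, -190348509281307781707],
      [0, 0, 0, 0, 0, 0, 0, 0, 0, 0, 0, 0, 0, 28672135575637570337491, 6462827961216697146213, 27056737929210212387842],
      [0, 0, 0, 0, 0, 0, 0, 0, 0, 0, 0, 0, 0, 0, 37354874946506045393902, 58417686333848664024403],
      [0, 0, 0, 0, 0, 0, 0, 0, 0, 0, 0, 0, 0, 0, 0, 1]]
   else [])"

lemma atLeastAtMost_1_5: "{1..5::nat} = {1, 2, 3, 4, 5}"
  by auto

lemma bezoutian_identity:
  "80 * (f10_diag u * diag_partner w - f10_diag w * diag_partner u)
    = (\<Sum>k = 1..5. (u k - w k) * bilin (bez_gram k) (bez_monomials k w) (bez_monomials k u))"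
  unfolding atLeastAtMost_1_5
  by (simp add: f10_diag_def diag_partner_def bilin_def lin_comb_def bez_gram_def bez_monomials_def)
    algebra

lemma bez_gram_1_sos:
  "bilin (bez_gram 1) (map (\<lambda>i. cnj (v i)) [0..<16]) (map v [0..<16])
    = of_real (weighted_sum_squares (bez_weights 1) (bez_factor 1) (map v [0..<16]))"
  unfolding of_real_weighted_sum_squares
  by (simp add: upt_rec bilin_def lin_comb_def bez_gram_def bez_weights_def bez_factor_def) algebra

lemma bez_gram_2_sos:
  "bilin (bez_gram 2) (map (\<lambda>i. cnj (v i)) [0..<16]) (map v [0..<16])
    = of_real (weighted_sum_squares (bez_weights 2) (bez_factor 2) (map v [0..<16]))"
  unfolding of_real_weighted_sum_squares
  by (simp add: upt_rec bilin_def lin_comb_def bez_gram_def bez_weights_def bez_factor_def) algebra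

lemma bez_gram_3_sos:
  "bilin (bez_gram 3) (map (\<lambda>i. cnj (v i)) [0..<16]) (map v [0..<16])
    = of_real (weighted_sum_squares (bez_weights 3) (bez_factor 3) (map v [0..<16]))"
  unfolding of_real_weighted_sum_squares
  by (simp add: upt_rec bilin_def lin_comb_def bez_gram_def bez_weights_def bez_factor_def) algebra

lemma bez_gram_4_sos:
  "bilin (bez_gram 4) (map (\<lambda>i. cnj (v i)) [0..<16]) (map v [0..<16])
    = of_real (weighted_sum_squares (bez_weights 4) (bez_factor 4) (map v [0..<16]))"
  unfolding of_real_weighted_sum_squares
  by (simp add: upt_rec bilin_def lin_comb_def bez_gram_def bez_weights_def bez_factor_def) algebra

lemma bez_gram_5_sos:
  "bilin (bez_gram 5) (map (\<lambda>i. cnj (v i)) [0..<16]) (map v [0..<16])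
    = of_real (weighted_sum_squares (bez_weights 5) (bez_factor 5) (map v [0..<16]))"
  unfolding of_real_weighted_sum_squares
  by (simp add: upt_rec bilin_def lin_comb_def bez_gram_def bez_weights_def bez_factor_def) algebra

lemma bez_gram_sos:
  assumes k: "k \<in> {1..5}" and v: "length v = 16"
  shows "bilin (bez_gram k) (map cnj v) v
    = of_real (weighted_sum_squares (bez_weights k) (bez_factor k) v)"
proof -
  have "v = map ((!) v) [0..<16]" using map_nth[of v] v by simp
  moreover have "map cnj v = map (\<lambda>i. cnj (v ! i)) [0..<16]" by (subst (1) \<open>v = _\<close>) simp
  ultimately show ?thesis
    using k bez_gram_1_sos[of "(!) v"] bez_gram_2_sos[of "(!) v"] bez_gram_3_sos[of "(!) v"]
      bez_gram_4_sos[of "(!) v"] bez_gram_5_sos[of "(!) v"]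
    unfolding atLeastAtMost_1_5 by auto
qed

lemma bez_monomials_cnj: "bez_monomials k (\<lambda>i. cnj (z i)) = map cnj (bez_monomials k z)"
  by (simp add: bez_monomials_def)

lemma length_bez_monomials: "k \<in> {1..5} \<Longrightarrow> length (bez_monomials k z) = 16"
  by (auto simp: bez_monomials_def)

lemma bez_weights_nonneg: "\<forall>c\<in>set (bez_weights k). c \<ge> 0"
  unfolding list_all_iff[symmetric] by (simp add: bez_weights_def)

lemma f10_diag_cnj: "f10_diag (\<lambda>i. cnj (z i)) = cnj (f10_diag z)"
  by (simp add: f10_diag_def)

lemma f10_diag_nonzero:
  assumes upper: "\<forall>k\<in>{1..5}. Im (z k) > 0"
  shows "f10_diag z \<noteq> 0"
proof
  assume root: "f10_diag z = 0"
  define r where "r k = weighted_sum_squares (bez_weights k) (bez_factor k) (bez_monomials k z)" for k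
  have "(\<Sum>k = 1..5. (z k - cnj (z k)) * of_real (r k))
      = 80 * (f10_diag z * diag_partner (\<lambda>i. cnj (z i)) - f10_diag (\<lambda>i. cnj (z i)) * diag_partner z)"
    unfolding bezoutian_identity r_def
    by (intro sum.cong) (simp_all add: bez_monomials_cnj bez_gram_sos length_bez_monomials)
  also have "\<dots> = 0" using root by (simp add: f10_diag_cnj)
  \<comment> \<open>the last square in \<open>r 1\<close> is a multiple of \<open>|z 1 * z 2 * z 4|\<^sup>2\<close>\<close>
  finally have "r 1 = 0"
    by (rule nonneg_weight_eq_0_if_sum_diff_cnj_eq_0)
      (use upper weighted_sum_squares_nonneg bez_weights_nonneg in \<open>auto simp: r_def\<close>)
  then have "lin_comb (bez_factor 1 ! 15) (bez_monomials 1 z) = 0"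
    unfolding r_def
    by (rule weighted_sum_squares_eq_0_imp_lin_comb_eq_0) (simp_all add: bez_weights_def bez_factor_def)
  then have "z 1 * z 2 * z 4 = 0"
    by (simp add: lin_comb_def bez_factor_def bez_monomials_def)
  moreover have "z k \<noteq> 0" if "k \<in> {1..5}" for k using upper that by fastforce
  ultimately show False by auto
qed

lemma f10_nonzero:
  assumes upper: "\<forall>i\<in>{1..10}. Im (x i) > 0"
  shows "f10 x \<noteq> 0"
proof
  assume "f10 x = 0"
  then have "pair_form (\<lambda>k. x (2 * k - 1) + x (2 * k)) (\<lambda>k. x (2 * k - 1) * x (2 * k)) = 0"
    by (simp add: f10_eq_pair_form)
  moreover have "\<forall>k\<in>{1..5}. Im (x (2 * k - 1)) > 0 \<and> Im (x (2 * k)) > 0"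
  proof
    fix k :: nat assume "k \<in> {1..5}"
    then have "2 * k - 1 \<in> {1..10}" and "2 * k \<in> {1..10}" by auto
    then show "Im (x (2 * k - 1)) > 0 \<and> Im (x (2 * k)) > 0" using upper by blast
  qed
  ultimately obtain z where "\<forall>k\<in>{1..5}. Im (z k) > 0" and "f10_diag z = 0"
    using pair_form_symmetrize[of "\<lambda>k. x (2 * k - 1)" "\<lambda>k. x (2 * k)"] by (auto simp: pair_form_diag)
  then show False using f10_diag_nonzero by blast
qed

theorem lemma4p5:
  shows "half_plane_property 10 V10_bases \<and> stable 10 f10"
proof -
  have "stable 10 f10"
    using f10_nonzero
    by (intro stable_if_no_zeros_upper_half_plane) (simp_all add: f10_def basis_gen_poly_cnj)
  then show ?thesis by (simp add: half_plane_property_def f10_def)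
qed

end
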